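(* Let $p$ be a prime and $n\ge1$, and suppose $p^n-1=st$ with positive integers $s<t$ and $\gcd(s,t)=1$. Let $\alpha$ be a generator of $\mathbb{F}_{p^n}^\times$, $\beta=\alpha^t$, $\gamma=\alpha^s$. Let $S_0\subset\mathbb{Z}_s\times\mathbb{Z}_t$ be a linearly independent pattern of size $m$ with $m\mid n$, and let $r=n/m$. Then there exist shifts $(a_1,b_1),\dots,(a_r,b_r)\in\mathbb{Z}_s\times\mathbb{Z}_t$ such that the translates $T_{a_1,b_1}(S_0),\dots,T_{a_r,b_r}(S_0)$ are pairwise disjoint and their union $S=\bigcup_{k=1}^r T_{a_k,b_k}(S_0)$ is a basis pattern, and hence, for any nonzero $\mathbb{F}_p$-linear map $\psi:\mathbb{F}_{p^n}\to\mathbb{F}_p$, a sampling pattern for the array $B_{i,j}=\psi(\beta^i\gamma^j)$.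
   Context: $\mathbb{Z}_s=\mathbb{Z}/s\mathbb{Z}$, $\mathbb{Z}_t=\mathbb{Z}/t\mathbb{Z}$; $(i,j)\mapsto\beta^i\gamma^j$ is a well-defined bijection $\mathbb{Z}_s\times\mathbb{Z}_t\to\mathbb{F}_{p^n}^\times$. For a pattern $S\subset\mathbb{Z}_s\times\mathbb{Z}_t$, $A|_S=\{\beta^i\gamma^j:(i,j)\in S\}$. $S$ is linearly independent if the elements of $A|_S$ are $\mathbb{F}_p$-linearly independent, and a basis pattern if $A|_S$ is an $\mathbb{F}_p$-basis of $\mathbb{F}_{p^n}$. $T_{a,b}(i,j)=(i+a\bmod s,\ j+b\bmod t)$. For $(a,b)\in\mathbb{Z}_s\times\mathbb{Z}_t$, the value pattern of $S$ is $v_{a,b}=(B_{i+a,j+b})_{(i,j)\in S}\in\mathbb{F}_p^S$; $S$ is a sampling pattern if the $p^n-1$ vectors $v_{a,b}$ are pairwise distinct and are exactly the nonzero vectors of $\mathbb{F}_p^S$. *)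

theory Defs
  imports Main "HOL-Library.FuncSet" "HOL-Computational_Algebra.Primes"
begin

text \<open>The prime subfield F_p of a field of characteristic p, i.e. the image of the naturals.\<close>
definition Fp :: "'a::field set" where
  "Fp = range of_nat"

definition pat_elt :: "'a::field \<Rightarrow> 'a \<Rightarrow> nat \<times> nat \<Rightarrow> 'a" where
  "pat_elt \<beta> \<gamma> x = \<beta> ^ fst x * \<gamma> ^ snd x"

text \<open>Translation T_{a,b} on Z_s x Z_t (represented as {0..<s} x {0..<t}).\<close>
definition shiftT :: "nat \<Rightarrow> nat \<Rightarrow> nat \<times> nat \<Rightarrow> nat \<times> nat \<Rightarrow> nat \<times> nat" where
  "shiftT s t ab x = ((fst x + fst ab) mod s, (snd x + snd ab) mod t)"

definition lin_indep_pat :: "'a::field \<Rightarrow> 'a \<Rightarrow> (nat \<times> nat) set \<Rightarrow> bool" where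
  "lin_indep_pat \<beta> \<gamma> S \<longleftrightarrow>
     (\<forall>c. (\<forall>x\<in>S. c x \<in> Fp) \<and> (\<Sum>x\<in>S. c x * pat_elt \<beta> \<gamma> x) = 0 \<longrightarrow> (\<forall>x\<in>S. c x = 0))"

definition basis_pat :: "'a::field \<Rightarrow> 'a \<Rightarrow> (nat \<times> nat) set \<Rightarrow> bool" where
  "basis_pat \<beta> \<gamma> S \<longleftrightarrow> lin_indep_pat \<beta> \<gamma> S \<and>
     (\<forall>y. \<exists>c. (\<forall>x\<in>S. c x \<in> Fp) \<and> y = (\<Sum>x\<in>S. c x * pat_elt \<beta> \<gamma> x))"

definition Fp_linear_functional :: "('a::field \<Rightarrow> 'a) \<Rightarrow> bool" where
  "Fp_linear_functional \<psi> \<longleftrightarrow> (\<forall>x. \<psi> x \<in> Fp) \<and> (\<forall>x y. \<psi> (x + y) = \<psi> x + \<psi> y)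
     \<and> (\<forall>c x. c \<in> Fp \<longrightarrow> \<psi> (c * x) = c * \<psi> x)"

definition value_pat :: "nat \<Rightarrow> nat \<Rightarrow> 'a::field \<Rightarrow> 'a \<Rightarrow> ('a \<Rightarrow> 'a) \<Rightarrow> (nat \<times> nat) set
    \<Rightarrow> nat \<times> nat \<Rightarrow> (nat \<times> nat \<Rightarrow> 'a)" where
  "value_pat s t \<beta> \<gamma> \<psi> S ab =
     restrict (\<lambda>x. \<psi> (pat_elt \<beta> \<gamma> (shiftT s t ab x))) S"

definition sampling_pat :: "nat \<Rightarrow> nat \<Rightarrow> 'a::field \<Rightarrow> 'a \<Rightarrow> ('a \<Rightarrow> 'a) \<Rightarrow> (nat \<times> nat) set \<Rightarrow> bool" where
  "sampling_pat s t \<beta> \<gamma> \<psi> S \<longleftrightarrow>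
     bij_betw (value_pat s t \<beta> \<gamma> \<psi> S) ({0..<s} \<times> {0..<t})
       {f \<in> S \<rightarrow>\<^sub>E Fp. \<exists>x\<in>S. f x \<noteq> 0}"

end

theory Submission
  imports Defs "HOL-Library.Disjoint_Sets" "HOL-Number_Theory.Residues"
begin

text \<open>
  The map (i, j) \<mapsto> \<beta>^i \<gamma>^j identifies Z_s \<times> Z_t with the multiplicative group of the field
  (Chinese remainder theorem), and the translation T_{a,b} becomes multiplication by
  c = \<beta>^a \<gamma>^b. A translate c S0 can be added to an independent pattern U without losing
  independence as soon as c \<cdot> span S0 meets span U only in 0. The bad c are quotients u / w of
  nonzero vectors, at most (p^m - 1)(p^|U| - 1) < p^n - 1 of them, so a good translate exists
  as long as |U| + m \<le> n; after n / m steps the union is a basis. For a basis S and a nonzero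
  functional \<psi>, the value pattern at c is (\<psi>(c x)) for x \<in> S, which determines c because S
  spans the field and \<psi> \<noteq> 0; as there are p^n - 1 shifts and p^n - 1 nonzero vectors, the
  value patterns are a bijection onto the nonzero vectors.
\<close>

lemma inj_on_card_eq_imp_bij_betw:
  assumes "finite B" "inj_on f A" "f ` A \<subseteq> B" "card A = card B"
  shows "bij_betw f A B"
  using assms by (simp add: bij_betw_def card_image card_subset_eq)

lemma power_mod_eq:
  fixes x :: "'a::monoid_mult"
  assumes "x ^ s = 1"
  shows "x ^ (k mod s) = x ^ k"
proof -
  have "x ^ k = (x ^ s) ^ (k div s) * x ^ (k mod s)"
    by (simp flip: power_mult power_add)
  then show ?thesis
    using assms by simp
qed

section \<open>The prime field\<close>

lemma Fp_eq_of_nat_image: "(Fp :: 'a::{field,finite} set) = of_nat ` {..<CHAR('a)}"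
proof -
  have "CHAR('a) > 0"
    by (simp add: finite_imp_CHAR_pos)
  moreover have "(of_nat k :: 'a) = of_nat (k mod CHAR('a))" for k
    by (subst of_nat_eq_iff_cong_CHAR) (simp add: cong_def)
  ultimately have "(of_nat k :: 'a) \<in> of_nat ` {..<CHAR('a)}" for k
    by (intro image_eqI[of _ _ "k mod CHAR('a)"]) simp_all
  then show ?thesis
    unfolding Fp_def by auto
qed

lemma card_Fp: "card (Fp :: 'a::{field,finite} set) = CHAR('a)"
proof -
  have "inj_on (of_nat :: nat \<Rightarrow> 'a) {..<CHAR('a)}"
    by (rule inj_onI) (metis lessThan_iff of_nat_eq_iff_cong_CHAR cong_less_modulus_unique_nat)
  then show ?thesis
    by (simp add: Fp_eq_of_nat_image card_image)
qed

lemma Fp_zero [simp]: "0 \<in> Fp"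
  unfolding Fp_def by (metis of_nat_0 rangeI)

lemma Fp_one [simp]: "1 \<in> Fp"
  unfolding Fp_def by (metis of_nat_1 rangeI)

lemma Fp_add: "a \<in> Fp \<Longrightarrow> b \<in> Fp \<Longrightarrow> a + b \<in> Fp"
  unfolding Fp_def by (auto simp flip: of_nat_add)

lemma Fp_uminus:
  assumes "(a :: 'a::{field,finite}) \<in> Fp"
  shows "- a \<in> Fp"
proof -
  obtain k where k: "a = of_nat k"
    using assms unfolding Fp_def by auto
  have "CHAR('a) > 0"
    by (simp add: finite_imp_CHAR_pos)
  then have "(CHAR('a) - 1) * k + k = CHAR('a) * k"
    by (cases "CHAR('a)") simp_all
  then have "of_nat ((CHAR('a) - 1) * k) + a = 0"
    by (metis k of_nat_add of_nat_CHAR of_nat_mult mult_zero_left)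
  then have "- a = of_nat ((CHAR('a) - 1) * k)"
    by (simp add: add_eq_0_iff2)
  then show ?thesis
    unfolding Fp_def by (metis rangeI)
qed

lemma Fp_diff: "(a :: 'a::{field,finite}) \<in> Fp \<Longrightarrow> b \<in> Fp \<Longrightarrow> a - b \<in> Fp"
  using Fp_add Fp_uminus by (metis diff_conv_add_uminus)

lemma CHAR_eq_prime_of_card:
  assumes "prime p" and "card (UNIV :: 'a::{field,finite} set) = p ^ n"
  shows "CHAR('a) = p"
proof -
  have "prime CHAR('a)"
    by (simp add: finite_imp_CHAR_pos prime_CHAR_semidom)
  moreover have "CHAR('a) dvd p ^ n"
    using CHAR_dvd_CARD assms(2) by metis
  ultimately show ?thesis
    using assms(1) prime_dvd_power primes_dvd_imp_eq by metis
qed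

lemma Fp_linear_functional_additive:
  "Fp_linear_functional \<psi> \<Longrightarrow> additive \<psi>"
  unfolding Fp_linear_functional_def by unfold_locales blast

section \<open>Linear algebra over the prime field\<close>

definition lincomb :: "('i \<Rightarrow> 'a::field) \<Rightarrow> 'i set \<Rightarrow> ('i \<Rightarrow> 'a) \<Rightarrow> 'a" where
  "lincomb g S c = (\<Sum>x\<in>S. c x * g x)"

definition Fp_span :: "('i \<Rightarrow> 'a::field) \<Rightarrow> 'i set \<Rightarrow> 'a set" where
  "Fp_span g S = {lincomb g S c | c. \<forall>x\<in>S. c x \<in> Fp}"

definition Fp_indep :: "('i \<Rightarrow> 'a::field) \<Rightarrow> 'i set \<Rightarrow> bool" where
  "Fp_indep g S \<longleftrightarrow> (\<forall>c. (\<forall>x\<in>S. c x \<in> Fp) \<and> lincomb g S c = 0 \<longrightarrow> (\<forall>x\<in>S. c x = 0))"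

lemma Fp_indepD:
  "Fp_indep g S \<Longrightarrow> \<forall>x\<in>S. c x \<in> Fp \<Longrightarrow> lincomb g S c = 0 \<Longrightarrow> x \<in> S \<Longrightarrow> c x = 0"
  unfolding Fp_indep_def by blast

lemma lin_indep_pat_iff_Fp_indep: "lin_indep_pat \<beta> \<gamma> S \<longleftrightarrow> Fp_indep (pat_elt \<beta> \<gamma>) S"
  unfolding lin_indep_pat_def Fp_indep_def lincomb_def ..

lemma basis_pat_iff:
  "basis_pat \<beta> \<gamma> S \<longleftrightarrow> Fp_indep (pat_elt \<beta> \<gamma>) S \<and> Fp_span (pat_elt \<beta> \<gamma>) S = UNIV"
  unfolding basis_pat_def lin_indep_pat_iff_Fp_indep Fp_span_def lincomb_def by blast

lemma lincomb_cong: "(\<And>x. x \<in> S \<Longrightarrow> c x = d x) \<Longrightarrow> lincomb g S c = lincomb g S d"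
  unfolding lincomb_def by (rule sum.cong) simp_all

lemma lincomb_diff: "lincomb g S c - lincomb g S d = lincomb g S (\<lambda>x. c x - d x)"
  unfolding lincomb_def by (simp add: sum_subtractf algebra_simps)

lemma lincomb_uminus: "- lincomb g S c = lincomb g S (\<lambda>x. - c x)"
  unfolding lincomb_def by (simp add: sum_negf)

lemma lincomb_Un:
  "finite U \<Longrightarrow> finite V \<Longrightarrow> U \<inter> V = {} \<Longrightarrow>
    lincomb g (U \<union> V) c = lincomb g U c + lincomb g V c"
  unfolding lincomb_def by (rule sum.union_disjoint)

lemma zero_in_Fp_span: "0 \<in> Fp_span g S"
  unfolding Fp_span_def lincomb_def by (intro CollectI exI[of _ "\<lambda>_. 0"]) simp

lemma gen_in_Fp_span:
  assumes "finite S" and "x \<in> S"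
  shows "g x \<in> Fp_span g S"
proof -
  have "lincomb g S (\<lambda>y. if y = x then 1 else 0) = (\<Sum>y\<in>S. if y = x then g y else 0)"
    unfolding lincomb_def by (rule sum.cong) simp_all
  also have "\<dots> = g x"
    using assms by simp
  finally have "lincomb g S (\<lambda>y. if y = x then 1 else 0) = g x" .
  then show ?thesis
    unfolding Fp_span_def by (intro CollectI exI[of _ "\<lambda>y. if y = x then 1 else 0"]) auto
qed

lemma card_Fp_span:
  fixes g :: "'i \<Rightarrow> 'a::{field,finite}"
  assumes "finite S" and "Fp_indep g S"
  shows "card (Fp_span g S) = CHAR('a) ^ card S"
proof -
  have span_eq: "Fp_span g S = lincomb g S ` (S \<rightarrow>\<^sub>E Fp)"
  proof
    show "Fp_span g S \<subseteq> lincomb g S ` (S \<rightarrow>\<^sub>E Fp)"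
    proof
      fix y assume "y \<in> Fp_span g S"
      then obtain c where c: "\<forall>x\<in>S. c x \<in> Fp" "y = lincomb g S c"
        unfolding Fp_span_def by blast
      moreover have "lincomb g S c = lincomb g S (restrict c S)"
        by (rule lincomb_cong) simp
      moreover have "restrict c S \<in> S \<rightarrow>\<^sub>E Fp"
        using c(1) by simp
      ultimately show "y \<in> lincomb g S ` (S \<rightarrow>\<^sub>E Fp)"
        by blast
    qed
  next
    show "lincomb g S ` (S \<rightarrow>\<^sub>E Fp) \<subseteq> Fp_span g S"
    proof
      fix y assume "y \<in> lincomb g S ` (S \<rightarrow>\<^sub>E Fp)"
      then obtain c where "c \<in> S \<rightarrow>\<^sub>E Fp" "y = lincomb g S c"
        by blast
      then show "y \<in> Fp_span g S"
        unfolding Fp_span_def by (blast dest: PiE_mem)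
    qed
  qed
  have "inj_on (lincomb g S) (S \<rightarrow>\<^sub>E Fp)"
  proof (rule inj_onI)
    fix c d assume c: "c \<in> S \<rightarrow>\<^sub>E Fp" and d: "d \<in> S \<rightarrow>\<^sub>E Fp"
      and eq: "lincomb g S c = lincomb g S d"
    have "\<forall>x\<in>S. c x - d x \<in> Fp"
      using c d by (blast dest: PiE_mem intro: Fp_diff)
    moreover have "lincomb g S (\<lambda>x. c x - d x) = 0"
      using eq by (simp flip: lincomb_diff)
    ultimately have "\<forall>x\<in>S. c x - d x = 0"
      using Fp_indepD[OF assms(2), of "\<lambda>x. c x - d x"] by blast
    then show "c = d"
      by (intro PiE_ext[OF c d]) simp
  qed
  then show ?thesis
    using assms(1) by (simp add: span_eq card_image card_PiE card_Fp)
qed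

lemma Fp_span_eq_UNIV:
  fixes g :: "'i \<Rightarrow> 'a::{field,finite}"
  assumes "finite S" and "Fp_indep g S" and "card (UNIV :: 'a set) = CHAR('a) ^ card S"
  shows "Fp_span g S = UNIV"
  using assms by (simp add: card_Fp_span card_eq_UNIV_imp_eq_UNIV)

lemma Fp_indep_Un:
  fixes g :: "'i \<Rightarrow> 'a::{field,finite}"
  assumes "finite U" "finite V" "U \<inter> V = {}" "Fp_indep g U" "Fp_indep g V"
    and spans: "Fp_span g U \<inter> Fp_span g V \<subseteq> {0}"
  shows "Fp_indep g (U \<union> V)"
  unfolding Fp_indep_def
proof (intro allI impI)
  fix c assume c: "(\<forall>x\<in>U \<union> V. c x \<in> Fp) \<and> lincomb g (U \<union> V) c = 0"
  then have "lincomb g U c = - lincomb g V c"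
    using lincomb_Un[OF assms(1-3), of g c] by (simp add: eq_neg_iff_add_eq_0)
  then have "lincomb g U c = lincomb g V (\<lambda>x. - c x)"
    by (simp add: lincomb_uminus)
  moreover have "lincomb g U c \<in> Fp_span g U" "lincomb g V (\<lambda>x. - c x) \<in> Fp_span g V"
    using c Fp_uminus unfolding Fp_span_def by blast+
  ultimately have U0: "lincomb g U c = 0"
    using spans by auto
  then have V0: "lincomb g V c = 0"
    using c lincomb_Un[OF assms(1-3), of g c] by simp
  show "\<forall>x\<in>U \<union> V. c x = 0"
    using c U0 V0 Fp_indepD[OF assms(4), of c] Fp_indepD[OF assms(5), of c] by blast
qed

lemma power_minus_one_mult_less:
  fixes q :: nat
  assumes "q \<ge> 2" and "m \<ge> 1" and "u + m \<le> n"
  shows "(q ^ u - 1) * (q ^ m - 1) < q ^ n - 1"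
proof -
  have "q ^ m \<ge> q ^ 1"
    using assms(1,2) by (intro power_increasing) simp_all
  then have "q ^ m \<ge> 2"
    using assms(1) by simp
  have "q ^ u \<ge> 1"
    using assms(1) by simp
  have "(q ^ u - 1) * (q ^ m - 1) \<le> (q ^ u - 1) * q ^ m"
    by simp
  also have "\<dots> = q ^ u * q ^ m - q ^ m"
    by (simp add: diff_mult_distrib)
  also have "\<dots> < q ^ u * q ^ m - 1"
    using \<open>q ^ m \<ge> 2\<close> \<open>q ^ u \<ge> 1\<close> mult_le_mono1[of 1 "q ^ u" "q ^ m"] by linarith
  also have "q ^ u * q ^ m \<le> q ^ n"
    using assms by (simp flip: power_add add: power_increasing)
  finally show ?thesis
    by linarith
qed

text \<open>The scalars c for which c B meets A outside 0 are quotients a / b of nonzero elements.\<close>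
lemma exists_scalar_avoiding:
  fixes A B :: "'a::{field,finite} set"
  assumes "card (A - {0}) * card (B - {0}) < card (UNIV :: 'a set) - 1"
  shows "\<exists>c. c \<noteq> 0 \<and> A \<inter> (*) c ` B \<subseteq> {0}"
proof -
  define bad where "bad = (\<lambda>(a, b). a / b) ` ((A - {0}) \<times> (B - {0}))"
  have "card bad \<le> card (A - {0}) * card (B - {0})"
    unfolding bad_def using card_image_le[of "(A - {0}) \<times> (B - {0})"] by (simp add: card_cartesian_product)
  then have "card bad < card (UNIV - {0 :: 'a})"
    using assms by (simp add: card_Diff_singleton)
  then have "\<not> UNIV - {0} \<subseteq> bad"
    using card_mono[of bad "UNIV - {0}"] by auto
  then obtain c where c: "c \<noteq> 0" "c \<notin> bad"
    by blast
  have "A \<inter> (*) c ` B \<subseteq> {0}"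
  proof
    fix a assume "a \<in> A \<inter> (*) c ` B"
    then obtain b where "a \<in> A" "b \<in> B" "a = c * b"
      by auto
    then show "a \<in> {0}"
      using c unfolding bad_def by (cases "b = 0") (auto intro!: image_eqI[of _ _ "(a, b)"])
  qed
  then show ?thesis
    using c(1) by blast
qed

text \<open>If c \<noteq> d had the same samples, \<psi> would vanish on (c - d) \<cdot> span S, the whole field.\<close>
lemma inj_functional_samples:
  fixes g :: "'i \<Rightarrow> 'a::field"
  assumes \<psi>: "Fp_linear_functional \<psi>" "\<psi> z \<noteq> 0" and span: "Fp_span g S = UNIV"
  shows "inj (\<lambda>c. restrict (\<lambda>x. \<psi> (c * g x)) S)"
proof (rule injI)
  interpret additive \<psi>
    using \<psi>(1) by (rule Fp_linear_functional_additive)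
  have hom: "\<psi> (a * y) = a * \<psi> y" if "a \<in> Fp" for a y
    using \<psi>(1) that unfolding Fp_linear_functional_def by blast
  fix c d assume eq: "restrict (\<lambda>x. \<psi> (c * g x)) S = restrict (\<lambda>x. \<psi> (d * g x)) S"
  have vanish: "\<psi> ((c - d) * g x) = 0" if "x \<in> S" for x
  proof -
    have "\<psi> (c * g x) = \<psi> (d * g x)"
      using fun_cong[OF eq, of x] that by simp
    then show ?thesis
      by (simp add: left_diff_distrib diff)
  qed
  show "c = d"
  proof (rule ccontr)
    assume "c \<noteq> d"
    obtain e where e: "\<forall>x\<in>S. e x \<in> Fp" "z / (c - d) = lincomb g S e"
      using span unfolding Fp_span_def by blast
    then have "z = lincomb g S e * (c - d)"
      using \<open>c \<noteq> d\<close> by (simp add: divide_eq_eq)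
    also have "\<dots> = (\<Sum>x\<in>S. e x * ((c - d) * g x))"
      unfolding lincomb_def sum_distrib_right by (simp add: mult_ac)
    finally have "\<psi> z = (\<Sum>x\<in>S. \<psi> (e x * ((c - d) * g x)))"
      by (simp add: sum)
    also have "\<dots> = (\<Sum>x\<in>S. e x * \<psi> ((c - d) * g x))"
      using e(1) hom by (intro sum.cong) simp_all
    also have "\<dots> = 0"
      using vanish by simp
    finally show False
      using \<psi>(2) by simp
  qed
qed

lemma bij_functional_samples:
  fixes g :: "'i \<Rightarrow> 'a::{field,finite}"
  assumes \<psi>: "Fp_linear_functional \<psi>" "\<psi> z \<noteq> 0" and span: "Fp_span g S = UNIV"
    and "finite S" and card: "card (UNIV :: 'a set) = CHAR('a) ^ card S"
  shows "bij_betw (\<lambda>c. restrict (\<lambda>x. \<psi> (c * g x)) S) (UNIV - {0})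
    {f \<in> S \<rightarrow>\<^sub>E Fp. \<exists>x\<in>S. f x \<noteq> 0}"
proof -
  define F where "F = (\<lambda>c. restrict (\<lambda>x. \<psi> (c * g x)) S)"
  have inj: "inj F"
    unfolding F_def using \<psi> span by (rule inj_functional_samples)
  have F_Fp: "F c \<in> S \<rightarrow>\<^sub>E Fp" for c
    using \<psi>(1) unfolding F_def Fp_linear_functional_def by simp
  have "F 0 = restrict (\<lambda>_. 0) S"
    unfolding F_def using additive.zero[OF Fp_linear_functional_additive[OF \<psi>(1)]] by simp
  then have target: "{f \<in> S \<rightarrow>\<^sub>E Fp. \<exists>x\<in>S. f x \<noteq> 0} = (S \<rightarrow>\<^sub>E Fp) - {F 0}"
    by (auto simp: fun_eq_iff PiE_def extensional_def)
  have "bij_betw F (UNIV - {0}) ((S \<rightarrow>\<^sub>E Fp) - {F 0})"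
  proof (rule inj_on_card_eq_imp_bij_betw)
    show "finite ((S \<rightarrow>\<^sub>E Fp) - {F 0})"
      using \<open>finite S\<close> by (simp add: finite_PiE)
    show "inj_on F (UNIV - {0})"
      using inj by (rule inj_on_subset) simp
    show "F ` (UNIV - {0}) \<subseteq> (S \<rightarrow>\<^sub>E Fp) - {F 0}"
      using F_Fp inj by (auto dest: injD)
    show "card (UNIV - {0 :: 'a}) = card ((S \<rightarrow>\<^sub>E Fp) - {F 0})"
      using \<open>finite S\<close> F_Fp card by (simp add: card_Diff_singleton card_PiE card_Fp)
  qed
  then show ?thesis
    unfolding target F_def .
qed

section \<open>Translates in multiplicative coordinates\<close>

text \<open>Abstracts (i, j) \<mapsto> \<beta>^i \<gamma>^j, under which the translation T_{a,b} is
  multiplication by \<beta>^a \<gamma>^b.\<close>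
locale mult_coords =
  fixes G :: "'i set" and g :: "'i \<Rightarrow> 'a::{field,finite}" and T :: "'i \<Rightarrow> 'i \<Rightarrow> 'i"
  assumes bij_g: "bij_betw g G (UNIV - {0})"
    and T_closed: "a \<in> G \<Longrightarrow> x \<in> G \<Longrightarrow> T a x \<in> G"
    and g_T: "a \<in> G \<Longrightarrow> x \<in> G \<Longrightarrow> g (T a x) = g a * g x"
begin

lemma finite_G: "finite G"
  using bij_betw_finite[OF bij_g] by simp

lemma inj_g: "inj_on g G"
  using bij_g by (simp add: bij_betw_def)

lemma g_nonzero: "x \<in> G \<Longrightarrow> g x \<noteq> 0"
  using bij_g by (auto simp: bij_betw_def)

lemma inj_on_T:
  assumes "a \<in> G" and "S \<subseteq> G"
  shows "inj_on (T a) S"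
proof (rule inj_onI)
  fix x y assume "x \<in> S" "y \<in> S" "T a x = T a y"
  then have "g a * g x = g a * g y"
    using assms g_T by (metis subsetD)
  then show "x = y"
    using assms \<open>x \<in> S\<close> \<open>y \<in> S\<close> g_nonzero inj_g by (auto dest: inj_onD)
qed

lemma lincomb_translate:
  assumes "a \<in> G" and "S \<subseteq> G"
  shows "lincomb g (T a ` S) c = g a * lincomb g S (c \<circ> T a)"
  unfolding lincomb_def sum_distrib_left sum.reindex[OF inj_on_T[OF assms]]
  using assms by (intro sum.cong) (auto simp: g_T subset_eq)

lemma Fp_span_translate:
  assumes "a \<in> G" and "S \<subseteq> G"
  shows "Fp_span g (T a ` S) \<subseteq> (*) (g a) ` Fp_span g S"
proof
  fix y assume "y \<in> Fp_span g (T a ` S)"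
  then obtain c where "\<forall>x\<in>T a ` S. c x \<in> Fp" "y = g a * lincomb g S (c \<circ> T a)"
    unfolding Fp_span_def lincomb_translate[OF assms] by blast
  then show "y \<in> (*) (g a) ` Fp_span g S"
    unfolding Fp_span_def by (intro image_eqI[of _ _ "lincomb g S (c \<circ> T a)"]) auto
qed

lemma Fp_indep_translate:
  assumes "a \<in> G" and "S \<subseteq> G" and "Fp_indep g S"
  shows "Fp_indep g (T a ` S)"
  unfolding Fp_indep_def
proof (intro allI impI)
  fix c assume c: "(\<forall>x\<in>T a ` S. c x \<in> Fp) \<and> lincomb g (T a ` S) c = 0"
  then have "lincomb g S (c \<circ> T a) = 0"
    using g_nonzero[OF assms(1)] by (simp add: lincomb_translate[OF assms(1,2)])
  moreover have "\<forall>x\<in>S. (c \<circ> T a) x \<in> Fp"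
    using c by simp
  ultimately have "\<forall>x\<in>S. (c \<circ> T a) x = 0"
    using Fp_indepD[OF assms(3), of "c \<circ> T a"] by blast
  then show "\<forall>x\<in>T a ` S. c x = 0"
    by simp
qed

lemma exists_translate_extending_indep:
  assumes "U \<subseteq> G" "Fp_indep g U" "S \<subseteq> G" "Fp_indep g S" "S \<noteq> {}"
    and "card U + card S \<le> n" and "card (UNIV :: 'a set) = CHAR('a) ^ n"
  shows "\<exists>a\<in>G. U \<inter> T a ` S = {} \<and> Fp_indep g (U \<union> T a ` S)"
proof -
  have fin: "finite U" "finite S"
    using assms(1,3) finite_G finite_subset by auto
  have "prime CHAR('a)"
    by (simp add: finite_imp_CHAR_pos prime_CHAR_semidom)
  then have "(CHAR('a) ^ card U - 1) * (CHAR('a) ^ card S - 1) < CHAR('a) ^ n - 1"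
    using assms(5,6) fin(2) by (intro power_minus_one_mult_less) (auto simp: prime_ge_2_nat Suc_le_eq card_gt_0_iff)
  then have "card (Fp_span g U - {0}) * card (Fp_span g S - {0}) < card (UNIV :: 'a set) - 1"
    using fin assms(2,4,7) by (simp add: card_Diff_singleton zero_in_Fp_span card_Fp_span)
  then obtain c where c: "c \<noteq> 0" "Fp_span g U \<inter> (*) c ` Fp_span g S \<subseteq> {0}"
    using exists_scalar_avoiding by blast
  then obtain a where a: "a \<in> G" "g a = c"
    using bij_g by (metis DiffI UNIV_I bij_betw_imp_surj_on imageE singletonD)
  then have spans: "Fp_span g U \<inter> Fp_span g (T a ` S) \<subseteq> {0}"
    using Fp_span_translate[OF a(1) assms(3)] c(2) by blast
  have disjoint: "U \<inter> T a ` S = {}"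
  proof (rule ccontr)
    assume "U \<inter> T a ` S \<noteq> {}"
    then obtain x where x: "x \<in> U" "x \<in> T a ` S"
      by blast
    have "g x \<in> Fp_span g U"
      using fin(1) x(1) by (rule gen_in_Fp_span)
    moreover have "g x \<in> Fp_span g (T a ` S)"
      using fin(2) x(2) by (intro gen_in_Fp_span) simp_all
    ultimately have "g x = 0"
      using spans by blast
    then show False
      using g_nonzero x(1) assms(1) by blast
  qed
  have "Fp_indep g (U \<union> T a ` S)"
    using fin disjoint assms(2) Fp_indep_translate[OF a(1) assms(3,4)] spans
    by (intro Fp_indep_Un) simp_all
  then show ?thesis
    using a(1) disjoint by blast
qed

lemma exists_disjoint_translates:
  assumes S: "S \<subseteq> G" "Fp_indep g S" "S \<noteq> {}"
    and "r * card S \<le> n" and card: "card (UNIV :: 'a set) = CHAR('a) ^ n"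
  shows "\<exists>sh. (\<forall>k\<in>{1..r}. sh k \<in> G) \<and> disjoint_family_on (\<lambda>k. T (sh k) ` S) {1..r} \<and>
    Fp_indep g (\<Union>k\<in>{1..r}. T (sh k) ` S) \<and> card (\<Union>k\<in>{1..r}. T (sh k) ` S) = r * card S"
  using assms(4)
proof (induction r)
  case 0
  then show ?case
    by (simp add: Fp_indep_def disjoint_family_on_def)
next
  case (Suc r)
  then have "r * card S \<le> n"
    by simp
  then obtain sh where sh: "\<forall>k\<in>{1..r}. sh k \<in> G" "disjoint_family_on (\<lambda>k. T (sh k) ` S) {1..r}"
    "Fp_indep g (\<Union>k\<in>{1..r}. T (sh k) ` S)" "card (\<Union>k\<in>{1..r}. T (sh k) ` S) = r * card S"
    using Suc.IH by blast
  define U where "U = (\<Union>k\<in>{1..r}. T (sh k) ` S)"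
  have U: "U \<subseteq> G"
    using sh(1) S(1) T_closed by (auto simp: U_def)
  have "card U + card S \<le> n"
    using sh(4) Suc.prems by (simp add: U_def)
  then obtain a where a: "a \<in> G" "U \<inter> T a ` S = {}" "Fp_indep g (U \<union> T a ` S)"
    using exists_translate_extending_indep[OF U sh(3)[folded U_def] S _ card] by blast
  define sh' where "sh' = sh(Suc r := a)"
  have old: "T (sh' k) ` S = T (sh k) ` S" if "k \<in> {1..r}" for k
    using that by (simp add: sh'_def)
  have new: "sh' (Suc r) = a"
    by (simp add: sh'_def)
  have interval: "{1..Suc r} = insert (Suc r) {1..r}"
    by auto
  have U_eq: "(\<Union>k\<in>{1..r}. T (sh' k) ` S) = U"
    unfolding U_def using old by (rule SUP_cong[OF refl])
  then have union: "(\<Union>k\<in>{1..Suc r}. T (sh' k) ` S) = U \<union> T a ` S"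
    unfolding interval UN_insert new by blast
  have "disjoint_family_on (\<lambda>k. T (sh' k) ` S) {1..r}"
    using sh(2) old by (simp add: disjoint_family_on_def)
  moreover have "T (sh' (Suc r)) ` S \<inter> (\<Union>k\<in>{1..r}. T (sh' k) ` S) = {}"
    using a(2) unfolding U_eq new by blast
  ultimately have disjoint: "disjoint_family_on (\<lambda>k. T (sh' k) ` S) {1..Suc r}"
    unfolding interval by (simp add: disjoint_family_on_insert)
  have "finite U" "finite S"
    using U S(1) finite_G finite_subset by auto
  then have "card (U \<union> T a ` S) = card U + card (T a ` S)"
    using a(2) by (intro card_Un_disjoint) simp_all
  also have "\<dots> = Suc r * card S"
    using sh(4) card_image[OF inj_on_T[OF a(1) S(1)]] by (simp add: U_def)
  finally have card_union: "card (U \<union> T a ` S) = Suc r * card S" .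
  have "\<forall>k\<in>{1..Suc r}. sh' k \<in> G"
    using sh(1) a(1) unfolding interval sh'_def by simp
  then show ?case
    using disjoint a(3) card_union by (intro exI[of _ sh'] conjI) (simp_all only: union)
qed

lemma bij_value_patterns:
  assumes "S \<subseteq> G" and "Fp_span g S = UNIV" and "card (UNIV :: 'a set) = CHAR('a) ^ card S"
    and "Fp_linear_functional \<psi>" and "\<psi> z \<noteq> 0"
  shows "bij_betw (\<lambda>a. restrict (\<lambda>x. \<psi> (g (T a x))) S) G
    {f \<in> S \<rightarrow>\<^sub>E Fp. \<exists>x\<in>S. f x \<noteq> 0}"
proof -
  have "finite S"
    using assms(1) finite_G finite_subset by blast
  have "bij_betw ((\<lambda>c. restrict (\<lambda>x. \<psi> (c * g x)) S) \<circ> g) G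
    {f \<in> S \<rightarrow>\<^sub>E Fp. \<exists>x\<in>S. f x \<noteq> 0}"
    using bij_g bij_functional_samples[OF assms(4,5,2) \<open>finite S\<close> assms(3)] by (rule bij_betw_trans)
  moreover have "((\<lambda>c. restrict (\<lambda>x. \<psi> (c * g x)) S) \<circ> g) a = restrict (\<lambda>x. \<psi> (g (T a x))) S"
    if "a \<in> G" for a
    using that assms(1) g_T by (auto simp: fun_eq_iff)
  ultimately show ?thesis
    by (rule bij_betw_cong[THEN iffD1, rotated])
qed

end

section \<open>Patterns in Z_s \<times> Z_t\<close>

lemma power_card_minus_one_eq_1:
  fixes x :: "'a::{field,finite}"
  assumes "x \<noteq> 0"
  shows "x ^ (card (UNIV :: 'a set) - 1) = 1"
proof -
  have "(\<Prod>y\<in>UNIV - {0}. x * y) = (\<Prod>y\<in>UNIV - {0 :: 'a}. y)"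
    by (rule prod.reindex_bij_witness[of _ "\<lambda>y. y / x" "\<lambda>y. x * y"]) (use assms in auto)
  moreover have "(\<Prod>y\<in>UNIV - {0}. x * y) = x ^ (card (UNIV :: 'a set) - 1) * (\<Prod>y\<in>UNIV - {0 :: 'a}. y)"
    by (simp add: prod.distrib card_Diff_singleton)
  moreover have "(\<Prod>y\<in>UNIV - {0 :: 'a}. y) \<noteq> 0"
    by simp
  ultimately show ?thesis
    by simp
qed

lemma bij_betw_power_generator:
  fixes \<alpha> :: "'a::{field,finite}"
  assumes "\<alpha> \<noteq> 0" and generates: "\<forall>x. x \<noteq> 0 \<longrightarrow> (\<exists>k. x = \<alpha> ^ k)"
  shows "bij_betw (\<lambda>k. \<alpha> ^ k) {0..<card (UNIV :: 'a set) - 1} (UNIV - {0})"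
proof -
  let ?N = "card (UNIV :: 'a set) - 1"
  have card_units: "card (UNIV - {0 :: 'a}) = ?N"
    by (simp add: card_Diff_singleton)
  then have "?N > 0"
    by (metis card_gt_0_iff finite Diff_iff UNIV_I one_neq_zero singletonD empty_iff)
  have "(\<lambda>k. \<alpha> ^ k) ` {0..<?N} = UNIV - {0}"
  proof
    show "(\<lambda>k. \<alpha> ^ k) ` {0..<?N} \<subseteq> UNIV - {0}"
      using assms(1) by auto
    show "UNIV - {0} \<subseteq> (\<lambda>k. \<alpha> ^ k) ` {0..<?N}"
    proof
      fix x :: 'a assume "x \<in> UNIV - {0}"
      then obtain k where "x = \<alpha> ^ k"
        using generates by blast
      then have "x = \<alpha> ^ (k mod ?N)"
        using power_mod_eq[OF power_card_minus_one_eq_1[OF assms(1)]] by simp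
      then show "x \<in> (\<lambda>k. \<alpha> ^ k) ` {0..<?N}"
        using \<open>?N > 0\<close> by auto
    qed
  qed
  then show ?thesis
    using card_units by (simp add: bij_betw_def eq_card_imp_inj_on)
qed

lemma crt_cancel:
  fixes s t :: nat
  assumes "coprime s t" and "[t * i + s * j = t * i' + s * j'] (mod s)" and "i < s" "i' < s"
  shows "i = i'"
proof -
  have "[t * i = t * i'] (mod s)"
    using assms(2) by (simp add: cong_def)
  then have "[i = i'] (mod s)"
    using assms(1) by (simp add: cong_mult_lcancel_nat coprime_commute)
  then show ?thesis
    using assms(3,4) by (rule cong_less_modulus_unique_nat)
qed

lemma bij_betw_crt:
  fixes s t :: nat
  assumes "coprime s t"
  shows "bij_betw (\<lambda>(i, j). (t * i + s * j) mod (s * t)) ({0..<s} \<times> {0..<t}) {0..<s * t}"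
proof (rule inj_on_card_eq_imp_bij_betw)
  show "inj_on (\<lambda>(i, j). (t * i + s * j) mod (s * t)) ({0..<s} \<times> {0..<t})"
  proof (rule inj_onI, clarsimp)
    fix i j i' j' assume bounds: "i < s" "j < t" "i' < s" "j' < t"
      and "(t * i + s * j) mod (s * t) = (t * i' + s * j') mod (s * t)"
    then have eq: "[t * i + s * j = t * i' + s * j'] (mod s * t)"
      by (simp add: cong_def)
    have "[t * i + s * j = t * i' + s * j'] (mod s)"
      using eq by (rule cong_modulus_mult_nat)
    then have "i = i'"
      using assms bounds by (intro crt_cancel) simp_all
    have "[s * j + t * i = s * j' + t * i'] (mod t)"
      using eq by (metis cong_modulus_mult_nat add.commute mult.commute)
    then have "j = j'"
      using assms bounds by (intro crt_cancel[of t s]) (simp_all add: coprime_commute)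
    with \<open>i = i'\<close> show "i = i' \<and> j = j'" ..
  qed
qed auto

lemma mult_coords_patterns:
  fixes \<alpha> :: "'a::{field,finite}"
  assumes "\<alpha> \<noteq> 0" and "\<forall>x. x \<noteq> 0 \<longrightarrow> (\<exists>k. x = \<alpha> ^ k)"
    and "card (UNIV :: 'a set) - 1 = s * t" and "coprime s t"
  shows "mult_coords ({0..<s} \<times> {0..<t}) (pat_elt (\<alpha> ^ t) (\<alpha> ^ s)) (shiftT s t)"
proof
  have order: "\<alpha> ^ (s * t) = 1"
    using power_card_minus_one_eq_1[OF assms(1)] assms(3) by simp
  have "bij_betw ((\<lambda>k. \<alpha> ^ k) \<circ> (\<lambda>(i, j). (t * i + s * j) mod (s * t)))
    ({0..<s} \<times> {0..<t}) (UNIV - {0})"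
    using bij_betw_crt[OF assms(4)] bij_betw_power_generator[OF assms(1,2)] assms(3)
    by (simp add: bij_betw_trans)
  moreover have "(\<lambda>k. \<alpha> ^ k) \<circ> (\<lambda>(i, j). (t * i + s * j) mod (s * t)) = pat_elt (\<alpha> ^ t) (\<alpha> ^ s)"
    by (simp add: fun_eq_iff case_prod_beta power_mod_eq[OF order] pat_elt_def power_add power_mult mult.commute)
  ultimately show "bij_betw (pat_elt (\<alpha> ^ t) (\<alpha> ^ s)) ({0..<s} \<times> {0..<t}) (UNIV - {0})"
    by simp
  fix a x assume "a \<in> {0..<s} \<times> {0..<t}" and "x \<in> {0..<s} \<times> {0..<t}"
  then show "shiftT s t a x \<in> {0..<s} \<times> {0..<t}"
    by (auto simp: shiftT_def)
  have "(\<alpha> ^ t) ^ s = 1" "(\<alpha> ^ s) ^ t = 1"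
    using order by (simp_all flip: power_mult add: mult.commute)
  then show "pat_elt (\<alpha> ^ t) (\<alpha> ^ s) (shiftT s t a x) =
    pat_elt (\<alpha> ^ t) (\<alpha> ^ s) a * pat_elt (\<alpha> ^ t) (\<alpha> ^ s) x"
    by (simp add: shiftT_def pat_elt_def power_mod_eq power_add mult_ac)
qed

theorem mainTheorem4:
  fixes \<alpha> :: "'a::{field,finite}"
    and p n s t m :: nat
    and S0 :: "(nat \<times> nat) set"
  assumes "prime p" and "n \<ge> 1" and "card (UNIV :: 'a set) = p ^ n"
    and "p ^ n - 1 = s * t" and "0 < s" and "s < t" and "coprime s t"
    and "\<alpha> \<noteq> 0" and "\<forall>x::'a. x \<noteq> 0 \<longrightarrow> (\<exists>k::nat. x = \<alpha> ^ k)"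
    and "S0 \<subseteq> {0..<s} \<times> {0..<t}"
    and "lin_indep_pat (\<alpha> ^ t) (\<alpha> ^ s) S0"
    and "card S0 = m" and "m dvd n"
  shows "\<exists>sh :: nat \<Rightarrow> nat \<times> nat.
           (\<forall>k\<in>{1..n div m}. sh k \<in> {0..<s} \<times> {0..<t}) \<and>
           (\<forall>k\<in>{1..n div m}. \<forall>l\<in>{1..n div m}. k \<noteq> l \<longrightarrow>
               shiftT s t (sh k) ` S0 \<inter> shiftT s t (sh l) ` S0 = {}) \<and>
           basis_pat (\<alpha> ^ t) (\<alpha> ^ s) (\<Union>k\<in>{1..n div m}. shiftT s t (sh k) ` S0) \<and>
           (\<forall>\<psi>. Fp_linear_functional \<psi> \<and> (\<exists>x. \<psi> x \<noteq> 0) \<longrightarrow>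
               sampling_pat s t (\<alpha> ^ t) (\<alpha> ^ s) \<psi> (\<Union>k\<in>{1..n div m}. shiftT s t (sh k) ` S0))"
proof -
  let ?g = "pat_elt (\<alpha> ^ t) (\<alpha> ^ s)" and ?G = "{0..<s} \<times> {0..<t}"
  interpret mult_coords ?G ?g "shiftT s t"
    using assms(3,4,7,8,9) by (intro mult_coords_patterns) simp_all
  have card: "card (UNIV :: 'a set) = CHAR('a) ^ n"
    using CHAR_eq_prime_of_card[OF assms(1,3)] assms(3) by simp
  have "m \<noteq> 0"
    using assms(2,13) by auto
  then have S0: "Fp_indep ?g S0" "S0 \<noteq> {}" "n div m * card S0 = n"
    using assms(11,12,13) by (auto simp: lin_indep_pat_iff_Fp_indep)
  obtain sh where sh: "\<forall>k\<in>{1..n div m}. sh k \<in> ?G"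
    "disjoint_family_on (\<lambda>k. shiftT s t (sh k) ` S0) {1..n div m}"
    "Fp_indep ?g (\<Union>k\<in>{1..n div m}. shiftT s t (sh k) ` S0)"
    "card (\<Union>k\<in>{1..n div m}. shiftT s t (sh k) ` S0) = n"
    using exists_disjoint_translates[OF assms(10) S0(1,2) _ card, where r = "n div m"] S0(3) by auto
  define S where "S = (\<Union>k\<in>{1..n div m}. shiftT s t (sh k) ` S0)"
  have "S \<subseteq> ?G"
    unfolding S_def using sh(1) assms(10) T_closed by blast
  have card_S: "card (UNIV :: 'a set) = CHAR('a) ^ card S"
    using card sh(4) unfolding S_def by simp
  have span: "Fp_span ?g S = UNIV"
    using sh(3) card_S finite_subset[OF \<open>S \<subseteq> ?G\<close> finite_G] unfolding S_def
    by (rule Fp_span_eq_UNIV[rotated])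
  show ?thesis
    using sh span bij_value_patterns[OF \<open>S \<subseteq> ?G\<close> span card_S]
    unfolding basis_pat_iff sampling_pat_def value_pat_def S_def disjoint_family_on_def
    by (intro exI[of _ sh]) auto
qed

end
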